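(* Let $S$ be a T2R semigroup, with $S=S_0\cup S_1$ as in the definition, and let $b\in S_0$ be such that $|J_b|=2$. Then $S_0J_b\subseteq I(b)$, $J_bS_0\subseteq I(b)$, and either $S_1J_b\subseteq I(b)$ or $S_1J_b=J_b$.
   Context: A semigroup $S$ is a $\Delta$-semigroup if the lattice of all congruences of $S$ is a chain with respect to inclusion. A semigroup $N$ with zero $0$ is nil if every element has some power equal to $0$; non-trivial means having more than one element. A T2R semigroup is a $\Delta$-semigroup $S$ which is the disjoint union of a non-trivial nil ideal $S_0$ (with zero $0$, which is then the zero of $S$) and a subsemigroup $S_1$ which is a two-element right zero semigroup (i.e. $S_1=\{u,v\}$ with $xy=y$ for $x,y\in S_1$). $S^1$ denotes $S$ with an identity $1$ adjoined. For $a\in S$: $J(a)=S^1aS^1$, $J_a=\{s\in S:J(s)=J(a)\}$, $I(a)=J(a)\setminus J_a$. Products of sets are taken elementwise. *)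

theory Defs
  imports Main
begin

definition semigroup_on :: "'a set \<Rightarrow> ('a \<Rightarrow> 'a \<Rightarrow> 'a) \<Rightarrow> bool" where
  "semigroup_on S f \<longleftrightarrow>
     (\<forall>x\<in>S. \<forall>y\<in>S. f x y \<in> S) \<and>
     (\<forall>x\<in>S. \<forall>y\<in>S. \<forall>w\<in>S. f (f x y) w = f x (f y w))"

definition congruence_on :: "'a set \<Rightarrow> ('a \<Rightarrow> 'a \<Rightarrow> 'a) \<Rightarrow> 'a rel \<Rightarrow> bool" where
  "congruence_on S f \<rho> \<longleftrightarrow> equiv S \<rho> \<and>
     (\<forall>a b c. (a, b) \<in> \<rho> \<longrightarrow> c \<in> S \<longrightarrow> (f c a, f c b) \<in> \<rho> \<and> (f a c, f b c) \<in> \<rho>)"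

definition delta_semigroup :: "'a set \<Rightarrow> ('a \<Rightarrow> 'a \<Rightarrow> 'a) \<Rightarrow> bool" where
  "delta_semigroup S f \<longleftrightarrow> semigroup_on S f \<and>
     (\<forall>\<rho> \<sigma>. congruence_on S f \<rho> \<longrightarrow> congruence_on S f \<sigma> \<longrightarrow> \<rho> \<subseteq> \<sigma> \<or> \<sigma> \<subseteq> \<rho>)"

text \<open>Positive powers: spow f x n = x^(n+1).\<close>
primrec spow :: "('a \<Rightarrow> 'a \<Rightarrow> 'a) \<Rightarrow> 'a \<Rightarrow> nat \<Rightarrow> 'a" where
  "spow f x 0 = x"
| "spow f x (Suc n) = f x (spow f x n)"

definition ideal_of :: "'a set \<Rightarrow> ('a \<Rightarrow> 'a \<Rightarrow> 'a) \<Rightarrow> 'a set \<Rightarrow> bool" where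
  "ideal_of S f I \<longleftrightarrow> I \<subseteq> S \<and> I \<noteq> {} \<and>
     (\<forall>s\<in>S. \<forall>x\<in>I. f s x \<in> I \<and> f x s \<in> I)"

definition nontrivial_nil_with_zero :: "'a set \<Rightarrow> ('a \<Rightarrow> 'a \<Rightarrow> 'a) \<Rightarrow> 'a \<Rightarrow> bool" where
  "nontrivial_nil_with_zero N f z \<longleftrightarrow> z \<in> N \<and>
     (\<forall>x\<in>N. f z x = z \<and> f x z = z) \<and>
     (\<forall>x\<in>N. \<exists>n. spow f x n = z) \<and>
     (\<exists>x\<in>N. x \<noteq> z)"

definition T2R :: "'a set \<Rightarrow> ('a \<Rightarrow> 'a \<Rightarrow> 'a) \<Rightarrow> 'a set \<Rightarrow> 'a \<Rightarrow> 'a \<Rightarrow> 'a \<Rightarrow> bool" where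
  "T2R S f S0 z u v \<longleftrightarrow> delta_semigroup S f \<and>
     S = S0 \<union> {u, v} \<and> S0 \<inter> {u, v} = {} \<and>
     ideal_of S f S0 \<and> nontrivial_nil_with_zero S0 f z \<and>
     u \<noteq> v \<and> (\<forall>x\<in>{u, v}. \<forall>y\<in>{u, v}. f x y = y)"

definition setmult :: "('a \<Rightarrow> 'a \<Rightarrow> 'a) \<Rightarrow> 'a set \<Rightarrow> 'a set \<Rightarrow> 'a set" where
  "setmult f A B = {f x y | x y. x \<in> A \<and> y \<in> B}"

text \<open>J(a) = S^1 a S^1.\<close>
definition Jideal :: "'a set \<Rightarrow> ('a \<Rightarrow> 'a \<Rightarrow> 'a) \<Rightarrow> 'a \<Rightarrow> 'a set" where
  "Jideal S f a = {a} \<union> {f s a | s. s \<in> S} \<union> {f a t | t. t \<in> S}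
                  \<union> {f (f s a) t | s t. s \<in> S \<and> t \<in> S}"

definition Jclass :: "'a set \<Rightarrow> ('a \<Rightarrow> 'a \<Rightarrow> 'a) \<Rightarrow> 'a \<Rightarrow> 'a set" where
  "Jclass S f a = {s \<in> S. Jideal S f s = Jideal S f a}"

definition Iideal :: "'a set \<Rightarrow> ('a \<Rightarrow> 'a \<Rightarrow> 'a) \<Rightarrow> 'a \<Rightarrow> 'a set" where
  "Iideal S f a = Jideal S f a - Jclass S f a"

end

theory Submission
  imports Defs
begin

text \<open>If \<open>y \<in> J(sy)\<close> with \<open>s\<close> in the nil ideal \<open>S\<^sub>0\<close>, then \<open>y = p(sy)q\<close> with
  \<open>p, q \<in> S\<^sup>1\<close>, so \<open>y = (ps)\<^sup>n y q\<^sup>n\<close> for all \<open>n\<close>, and nilpotency of \<open>ps\<close> gives \<open>y = 0\<close>.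
  Since \<open>|J\<^sub>b| = 2\<close> excludes \<open>J\<^sub>b = {0}\<close>, left multiplication by \<open>S\<^sub>0\<close> therefore moves
  \<open>J\<^sub>b\<close> strictly down into \<open>I(b)\<close>; right multiplication is the same argument in the
  opposite semigroup. If \<open>y = wx \<in> J\<^sub>b\<close> for some \<open>w \<in> S\<^sub>1\<close>, \<open>x \<in> J\<^sub>b\<close>, then \<open>u\<close> and \<open>v\<close>
  fix \<open>y\<close> because \<open>S\<^sub>1\<close> is right zero; by the first argument every element of
  \<open>J\<^sub>b \<subseteq> J(y)\<close> is \<open>y\<close> or \<open>yt\<close>, so \<open>S\<^sub>1\<close> fixes all of \<open>J\<^sub>b\<close>.\<close>

lemma setmult_flip: "setmult (\<lambda>x y. f y x) A B = setmult f B A"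
  unfolding setmult_def by blast

lemma setmult_left_fixed_eq:
  assumes "A \<noteq> {}" and "\<And>e y. e \<in> A \<Longrightarrow> y \<in> C \<Longrightarrow> f e y = y"
  shows "setmult f A C = C"
  using assms unfolding setmult_def by force

locale semigroup_carrier =
  fixes S :: "'a set" and mult :: "'a \<Rightarrow> 'a \<Rightarrow> 'a" (infixl "\<cdot>" 70)
  assumes closed: "x \<in> S \<Longrightarrow> y \<in> S \<Longrightarrow> x \<cdot> y \<in> S"
    and assoc: "x \<in> S \<Longrightarrow> y \<in> S \<Longrightarrow> w \<in> S \<Longrightarrow> x \<cdot> y \<cdot> w = x \<cdot> (y \<cdot> w)"
begin

sublocale dual: semigroup_carrier S "\<lambda>x y. y \<cdot> x"
  by unfold_locales (simp_all add: closed assoc)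

lemma spow_closed: "a \<in> S \<Longrightarrow> spow (\<cdot>) a n \<in> S"
  by (induction n) (simp_all add: closed)

lemma spow_commute: "a \<in> S \<Longrightarrow> spow (\<cdot>) a n \<cdot> a = a \<cdot> spow (\<cdot>) a n"
  by (induction n) (simp_all add: assoc spow_closed)

lemma spow_flip: "a \<in> S \<Longrightarrow> spow (\<lambda>x y. y \<cdot> x) a n = spow (\<cdot>) a n"
  by (induction n) (simp_all add: spow_commute)

lemma Jideal_self: "a \<in> Jideal S (\<cdot>) a"
  unfolding Jideal_def by blast

lemma Jideal_flip:
  assumes "a \<in> S"
  shows "Jideal S (\<lambda>x y. y \<cdot> x) a = Jideal S (\<cdot>) a"
proof -
  have "t \<cdot> (a \<cdot> s) = t \<cdot> a \<cdot> s" if "s \<in> S" "t \<in> S" for s t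
    using that assms by (simp add: assoc)
  then have "{t \<cdot> (a \<cdot> s) |s t. s \<in> S \<and> t \<in> S} = {s \<cdot> a \<cdot> t |s t. s \<in> S \<and> t \<in> S}"
    by force
  then show ?thesis
    unfolding Jideal_def by blast
qed

lemma mem_Jideal_iff:
  "y \<in> Jideal S (\<cdot>) a \<longleftrightarrow>
     y = a \<or> (\<exists>p\<in>S. y = p \<cdot> a) \<or> (\<exists>q\<in>S. y = a \<cdot> q) \<or> (\<exists>p\<in>S. \<exists>q\<in>S. y = p \<cdot> a \<cdot> q)"
  unfolding Jideal_def by blast

lemma Jideal_mult_left:
  assumes "a \<in> S" and "y \<in> Jideal S (\<cdot>) a" and "s \<in> S"
  shows "s \<cdot> y \<in> Jideal S (\<cdot>) a"
  using assms unfolding mem_Jideal_iff by (metis assoc closed)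

end

context semigroup_carrier
begin

lemma Jideal_mult_right:
  assumes "a \<in> S" and "y \<in> Jideal S (\<cdot>) a" and "s \<in> S"
  shows "y \<cdot> s \<in> Jideal S (\<cdot>) a"
  using dual.Jideal_mult_left[of a y s] assms by (simp add: Jideal_flip)

lemma Jideal_subset:
  assumes "a \<in> S" and "y \<in> Jideal S (\<cdot>) a"
  shows "Jideal S (\<cdot>) y \<subseteq> Jideal S (\<cdot>) a"
proof
  fix w assume "w \<in> Jideal S (\<cdot>) y"
  then consider "w = y" | p where "p \<in> S" "w = p \<cdot> y" | q where "q \<in> S" "w = y \<cdot> q"
    | p q where "p \<in> S" "q \<in> S" "w = p \<cdot> y \<cdot> q"
    unfolding mem_Jideal_iff by blast
  then show "w \<in> Jideal S (\<cdot>) a"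
    by cases (use assms in \<open>simp_all add: Jideal_mult_left Jideal_mult_right\<close>)
qed

lemma Jclass_flip:
  assumes "b \<in> S"
  shows "Jclass S (\<lambda>x y. y \<cdot> x) b = Jclass S (\<cdot>) b"
  unfolding Jclass_def using Jideal_flip Jideal_flip[OF assms] by blast

lemma Iideal_flip:
  assumes "b \<in> S"
  shows "Iideal S (\<lambda>x y. y \<cdot> x) b = Iideal S (\<cdot>) b"
  unfolding Iideal_def using Jideal_flip[OF assms] Jclass_flip[OF assms] by (rule arg_cong2)

lemma setmult_Jclass_subset_Iideal:
  assumes "A \<subseteq> S" and "setmult (\<cdot>) A (Jclass S (\<cdot>) b) \<inter> Jclass S (\<cdot>) b = {}"
  shows "setmult (\<cdot>) A (Jclass S (\<cdot>) b) \<subseteq> Iideal S (\<cdot>) b"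
proof
  fix y assume y: "y \<in> setmult (\<cdot>) A (Jclass S (\<cdot>) b)"
  then obtain s x where "s \<in> A" "x \<in> Jclass S (\<cdot>) b" "y = s \<cdot> x"
    unfolding setmult_def by blast
  then have "y \<in> Jideal S (\<cdot>) b"
    using assms(1) Jideal_mult_left[OF _ Jideal_self, of x s] unfolding Jclass_def by auto
  then show "y \<in> Iideal S (\<cdot>) b"
    using y assms(2) unfolding Iideal_def by blast
qed

end

locale nil_ideal_semigroup = semigroup_carrier +
  fixes N :: "'a set" and z :: 'a
  assumes ideal_subset: "N \<subseteq> S"
    and ideal_left: "s \<in> S \<Longrightarrow> x \<in> N \<Longrightarrow> s \<cdot> x \<in> N"
    and ideal_right: "s \<in> S \<Longrightarrow> x \<in> N \<Longrightarrow> x \<cdot> s \<in> N"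
    and zero_mem: "z \<in> N"
    and zero_left_ideal: "x \<in> N \<Longrightarrow> z \<cdot> x = z"
    and zero_right_ideal: "x \<in> N \<Longrightarrow> x \<cdot> z = z"
    and nil: "x \<in> N \<Longrightarrow> \<exists>n. spow (\<cdot>) x n = z"
begin

sublocale dual: nil_ideal_semigroup S "\<lambda>x y. y \<cdot> x" N z
  by unfold_locales
    (use ideal_subset in \<open>auto simp: ideal_left ideal_right zero_mem zero_left_ideal
      zero_right_ideal spow_flip nil\<close>)

lemma zero_left:
  assumes w: "w \<in> S"
  shows "z \<cdot> w = z"
proof -
  have zN: "z \<cdot> w \<in> N" and zS: "z \<in> S" and zwS: "z \<cdot> w \<in> S"
    using ideal_right[OF w zero_mem] zero_mem ideal_subset by auto
  have "z \<cdot> w = z \<cdot> w \<cdot> z \<cdot> w"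
    using zero_right_ideal[OF zN] by simp
  also have "\<dots> = z \<cdot> (w \<cdot> (z \<cdot> w))"
    using assoc[OF zwS zS w] assoc[OF zS w zwS] by simp
  also have "\<dots> = z"
    using zero_left_ideal[OF ideal_left[OF w zN]] .
  finally show ?thesis .
qed

end

context nil_ideal_semigroup
begin

lemma zero_right: "w \<in> S \<Longrightarrow> w \<cdot> z = z"
  using dual.zero_left .

lemma Jideal_zero: "Jideal S (\<cdot>) z = {z}"
  unfolding Jideal_def by (auto simp: zero_left zero_right)

lemma Jclass_zero: "Jclass S (\<cdot>) z = {z}"
  using Jideal_self zero_mem ideal_subset unfolding Jclass_def by (auto simp: Jideal_zero)

lemma left_fixed_iterate:
  assumes "a \<in> S" "y \<in> S" "y = a \<cdot> y"
  shows "y = spow (\<cdot>) a n \<cdot> y"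
proof (induction n)
  case (Suc n)
  then show ?case
    using assms by (metis assoc spow.simps(2) spow_closed)
qed (use assms in simp)

lemma sandwich_iterate:
  assumes "a \<in> S" "y \<in> S" "q \<in> S" "y = a \<cdot> y \<cdot> q"
  shows "y = spow (\<cdot>) a n \<cdot> y \<cdot> spow (\<cdot>) q n"
proof (induction n)
  case (Suc n)
  have "y = a \<cdot> (spow (\<cdot>) a n \<cdot> y \<cdot> spow (\<cdot>) q n) \<cdot> q"
    using assms(4) Suc by simp
  also have "\<dots> = spow (\<cdot>) a (Suc n) \<cdot> y \<cdot> (spow (\<cdot>) q n \<cdot> q)"
    using assms by (simp add: assoc closed spow_closed)
  finally show ?case
    using assms(3) by (simp add: spow_commute)
qed (use assms in simp)

lemma left_fixed_by_nil_eq_zero: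
  assumes "a \<in> N" "y \<in> S" "y = a \<cdot> y"
  shows "y = z"
proof -
  obtain n where "spow (\<cdot>) a n = z"
    using nil assms(1) by blast
  then show ?thesis
    using left_fixed_iterate[of a y n] assms ideal_subset zero_left by auto
qed

lemma sandwiched_by_nil_eq_zero:
  assumes "a \<in> N" "y \<in> S" "q \<in> S" "y = a \<cdot> y \<cdot> q"
  shows "y = z"
proof -
  obtain n where "spow (\<cdot>) a n = z"
    using nil assms(1) by blast
  then show ?thesis
    using sandwich_iterate[of a y q n] assms ideal_subset zero_left spow_closed by auto
qed

lemma mem_Jideal_left_mult_eq_zero:
  assumes s: "s \<in> N" and y: "y \<in> S" and "y \<in> Jideal S (\<cdot>) (s \<cdot> y)"
  shows "y = z"
proof -
  have sS: "s \<in> S"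
    using s ideal_subset by auto
  consider "y = s \<cdot> y" | p where "p \<in> S" "y = p \<cdot> s \<cdot> y" | q where "q \<in> S" "y = s \<cdot> y \<cdot> q"
    | p q where "p \<in> S" "q \<in> S" "y = p \<cdot> s \<cdot> y \<cdot> q"
    using assms(3) sS y unfolding mem_Jideal_iff by (auto simp: assoc)
  then show ?thesis
  proof cases
    case 1
    then show ?thesis using left_fixed_by_nil_eq_zero s y by blast
  next
    case (2 p)
    then show ?thesis using left_fixed_by_nil_eq_zero ideal_left[OF _ s] y by blast
  next
    case (3 q)
    then show ?thesis using sandwiched_by_nil_eq_zero s y by blast
  next
    case (4 p q)
    then show ?thesis using sandwiched_by_nil_eq_zero ideal_left[OF _ s] y by blast
  qed
qed

lemma Jclass_disjoint_Jideal_left_mult: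
  assumes s: "s \<in> N" and y: "y \<in> Jclass S (\<cdot>) b" and nz: "z \<notin> Jclass S (\<cdot>) b"
  shows "Jclass S (\<cdot>) b \<inter> Jideal S (\<cdot>) (s \<cdot> y) = {}"
proof (rule ccontr)
  assume "Jclass S (\<cdot>) b \<inter> Jideal S (\<cdot>) (s \<cdot> y) \<noteq> {}"
  then obtain y' where y': "y' \<in> Jclass S (\<cdot>) b" "y' \<in> Jideal S (\<cdot>) (s \<cdot> y)"
    by blast
  have yS: "y \<in> S" and sS: "s \<in> S"
    using y s ideal_subset unfolding Jclass_def by auto
  have "y \<in> Jideal S (\<cdot>) y'"
    using y y' Jideal_self unfolding Jclass_def by auto
  also have "\<dots> \<subseteq> Jideal S (\<cdot>) (s \<cdot> y)"
    using Jideal_subset y'(2) closed sS yS by blast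
  finally have "y = z"
    using mem_Jideal_left_mult_eq_zero s yS by blast
  with y nz show False
    by blast
qed

lemma setmult_nil_Jclass_subset_Iideal:
  assumes "z \<notin> Jclass S (\<cdot>) b"
  shows "setmult (\<cdot>) N (Jclass S (\<cdot>) b) \<subseteq> Iideal S (\<cdot>) b"
proof (rule setmult_Jclass_subset_Iideal[OF ideal_subset])
  show "setmult (\<cdot>) N (Jclass S (\<cdot>) b) \<inter> Jclass S (\<cdot>) b = {}"
    using Jclass_disjoint_Jideal_left_mult[OF _ _ assms] Jideal_self
    unfolding setmult_def by blast
qed

end

context nil_ideal_semigroup
begin

lemma setmult_Jclass_nil_subset_Iideal:
  assumes "b \<in> S" "z \<notin> Jclass S (\<cdot>) b"
  shows "setmult (\<cdot>) (Jclass S (\<cdot>) b) N \<subseteq> Iideal S (\<cdot>) b"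
  using dual.setmult_nil_Jclass_subset_Iideal[of b] assms
  unfolding setmult_flip[of "(\<cdot>)"] Jclass_flip[OF assms(1)] Iideal_flip[OF assms(1)] by blast

lemma Jclass_left_fixed:
  assumes nz: "z \<notin> Jclass S (\<cdot>) b" and y: "y \<in> Jclass S (\<cdot>) b"
    and fixed: "\<And>e. e \<in> S - N \<Longrightarrow> e \<cdot> y = y"
    and y': "y' \<in> Jclass S (\<cdot>) b" and e: "e \<in> S - N"
  shows "e \<cdot> y' = y'"
proof -
  have yS: "y \<in> S"
    using y unfolding Jclass_def by blast
  have not_below: "y' \<notin> Jideal S (\<cdot>) (s \<cdot> y)" if "s \<in> N" for s
    using Jclass_disjoint_Jideal_left_mult[OF that y nz] y' by blast
  have "y' \<in> Jideal S (\<cdot>) y"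
    using y y' Jideal_self unfolding Jclass_def by auto
  then consider "y' = y" | p where "p \<in> S" "y' = p \<cdot> y" | q where "q \<in> S" "y' = y \<cdot> q"
    | p q where "p \<in> S" "q \<in> S" "y' = p \<cdot> y \<cdot> q"
    unfolding mem_Jideal_iff by blast
  then have "y' = y \<or> (\<exists>q\<in>S. y' = y \<cdot> q)"
  proof cases
    case (2 p)
    then show ?thesis
      using not_below[of p] Jideal_self fixed by (cases "p \<in> N") auto
  next
    case (4 p q)
    moreover have "p \<cdot> y \<cdot> q \<in> Jideal S (\<cdot>) (p \<cdot> y)"
      using 4 yS closed Jideal_mult_right Jideal_self by blast
    ultimately show ?thesis
      using not_below[of p] fixed by (cases "p \<in> N") auto
  qed auto
  then show ?thesis
  proof
    assume "\<exists>q\<in>S. y' = y \<cdot> q"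
    then obtain q where q: "q \<in> S" "y' = y \<cdot> q" ..
    then have "e \<cdot> y' = e \<cdot> y \<cdot> q"
      using assoc[of e y q] e yS by simp
    also have "\<dots> = y'"
      using fixed[OF e] q by simp
    finally show ?thesis .
  qed (simp add: fixed[OF e])
qed

lemma right_zero_mult_Jclass:
  assumes S: "S = N \<union> E" and disj: "N \<inter> E = {}"
    and right_zero: "\<And>x y. x \<in> E \<Longrightarrow> y \<in> E \<Longrightarrow> x \<cdot> y = y"
    and nz: "z \<notin> Jclass S (\<cdot>) b"
  shows "setmult (\<cdot>) E (Jclass S (\<cdot>) b) \<subseteq> Iideal S (\<cdot>) b
    \<or> setmult (\<cdot>) E (Jclass S (\<cdot>) b) = Jclass S (\<cdot>) b"
proof (cases "setmult (\<cdot>) E (Jclass S (\<cdot>) b) \<inter> Jclass S (\<cdot>) b = {}")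
  case True
  have "E \<subseteq> S"
    using S by blast
  with True show ?thesis
    by (intro disjI1 setmult_Jclass_subset_Iideal)
next
  case False
  then obtain w x where w: "w \<in> E" and x: "x \<in> Jclass S (\<cdot>) b" and wx: "w \<cdot> x \<in> Jclass S (\<cdot>) b"
    unfolding setmult_def by blast
  have E: "E = S - N"
    using S disj by blast
  have "e \<cdot> (w \<cdot> x) = w \<cdot> x" if "e \<in> S - N" for e
  proof -
    have "e \<in> S" "w \<in> S" "x \<in> S"
      using that w x S unfolding Jclass_def by auto
    then have "e \<cdot> (w \<cdot> x) = e \<cdot> w \<cdot> x"
      by (simp add: assoc)
    also have "\<dots> = w \<cdot> x"
      using right_zero[of e w] that w unfolding E by simp
    finally show ?thesis .
  qed
  then have "e \<cdot> y = y" if "e \<in> E" "y \<in> Jclass S (\<cdot>) b" for e y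
    by (rule Jclass_left_fixed[OF nz wx]) (use that E in auto)
  with w show ?thesis
    by (intro disjI2 setmult_left_fixed_eq) auto
qed

end

lemma T2R_nil_ideal_semigroup:
  assumes "T2R S f S0 z u v"
  shows "nil_ideal_semigroup S f S0 z"
proof -
  have "semigroup_on S f" "ideal_of S f S0" "nontrivial_nil_with_zero S0 f z"
    using assms unfolding T2R_def delta_semigroup_def by blast+
  then show ?thesis
    unfolding semigroup_on_def ideal_of_def nontrivial_nil_with_zero_def
    by unfold_locales blast+
qed

theorem corollary3:
  fixes S S0 :: "'a set" and f :: "'a \<Rightarrow> 'a \<Rightarrow> 'a" and z u v b :: 'a
  assumes "T2R S f S0 z u v"
    and "b \<in> S0"
    and "card (Jclass S f b) = 2"
  shows "setmult f S0 (Jclass S f b) \<subseteq> Iideal S f b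
       \<and> setmult f (Jclass S f b) S0 \<subseteq> Iideal S f b
       \<and> (setmult f {u, v} (Jclass S f b) \<subseteq> Iideal S f b
          \<or> setmult f {u, v} (Jclass S f b) = Jclass S f b)"
proof -
  interpret nil_ideal_semigroup S f S0 z
    using assms(1) by (rule T2R_nil_ideal_semigroup)
  have S: "S = S0 \<union> {u, v}" and disj: "S0 \<inter> {u, v} = {}"
    and right_zero: "\<And>x y. x \<in> {u, v} \<Longrightarrow> y \<in> {u, v} \<Longrightarrow> f x y = y"
    using assms(1) unfolding T2R_def by blast+
  have "z \<notin> Jclass S f b"
  proof
    assume "z \<in> Jclass S f b"
    then have "Jclass S f b = Jclass S f z"
      unfolding Jclass_def by auto
    with assms(3) show False
      by (simp add: Jclass_zero)
  qed
  moreover have "b \<in> S"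
    using assms(2) ideal_subset by blast
  ultimately show ?thesis
    using setmult_nil_Jclass_subset_Iideal setmult_Jclass_nil_subset_Iideal
      right_zero_mult_Jclass[OF S disj right_zero] by simp
qed

end
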